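(* Let $F$ be a continuous, strictly increasing CDF on $[0,1]$ and $v\in[0,1]$, and suppose Assumption 2 holds with constants $\Delta>0$, $0<c_f<C_f$, $\lambda>0$. Let $W_{v,F}(q)=U_{v,F}(F^{-1}(q))$ and $q^*_{v,F}=F(b^*_{v,F})$. Then for every $q\in[q^*_{v,F},\,q^*_{v,F}+C_f\Delta]$ (with $F^{-1}(q)\in[b^*_{v,F},b^*_{v,F}+\Delta]$), $$W_{v,F}(q^*_{v,F})-W_{v,F}(q)\ \le\ \frac{\lambda}{c_f}\,(q^*_{v,F}-q)^2.$$
   Context: $U_{v,F}(b)=(v-b)F(b)$, $b^*_{v,F}=\max\{\operatorname{argmax}_{b\in[0,1]}U_{v,F}(b)\}$. Assumption 2 (constants $\Delta>0$, $c_f,C_f,\lambda$): $F$ admits a density $f$ with $c_f<f(b)<C_f$ for all $b\in[b^*_{v,F}-\Delta,b^*_{v,F}+\Delta]$, and $\phi_F:b\mapsto b+F(b)/f(b)$ is differentiable with $\phi_F'(b)\le\lambda$ on $[b^*_{v,F},b^*_{v,F}+\Delta]$. *)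

theory Defs
  imports "HOL-Analysis.Analysis"
begin

definition U :: "real \<Rightarrow> (real \<Rightarrow> real) \<Rightarrow> real \<Rightarrow> real" where
  "U v F b = (v - b) * F b"

definition bstar :: "real \<Rightarrow> (real \<Rightarrow> real) \<Rightarrow> real" where
  "bstar v F = Sup {b \<in> {0..1}. \<forall>b'\<in>{0..1}. U v F b' \<le> U v F b}"

definition Finv :: "(real \<Rightarrow> real) \<Rightarrow> real \<Rightarrow> real" where
  "Finv F q = the_inv_into {0..1} F q"

definition W :: "real \<Rightarrow> (real \<Rightarrow> real) \<Rightarrow> real \<Rightarrow> real" where
  "W v F q = U v F (Finv F q)"

definition qstar :: "real \<Rightarrow> (real \<Rightarrow> real) \<Rightarrow> real" where
  "qstar v F = F (bstar v F)"

end

theory Submission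
  imports Defs
begin

text \<open>At the optimal bid the virtual value \<open>\<phi>(b) = b + F b / f b\<close> equals \<open>v\<close> (first-order
condition), and \<open>U'(x) = f x * (v - \<phi> x)\<close>. Beyond the optimum, \<open>\<phi> x - v \<le> \<lambda> (x - b\<^sup>*)\<close>
since \<open>\<phi>' \<le> \<lambda>\<close>, and \<open>x - b\<^sup>* \<le> (F x - F b\<^sup>*) / c\<^sub>f\<close> since \<open>f \<ge> c\<^sub>f\<close>. Hence the loss
\<open>U(b\<^sup>*) - U(x)\<close> grows no faster than \<open>\<lambda>/c\<^sub>f (F x - F b\<^sup>*)\<^sup>2\<close>, whose derivative dominates
\<open>-U'(x)\<close>.\<close>

lemma increment_le_of_derivative_le:
  fixes g g' :: "real \<Rightarrow> real"
  assumes "a \<le> b" "{a..b} \<subseteq> S"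
    and deriv: "\<And>x. x \<in> {a..b} \<Longrightarrow> (g has_real_derivative g' x) (at x within S)"
    and bound: "\<And>x. x \<in> {a..b} \<Longrightarrow> g' x \<le> M"
  shows "g b - g a \<le> M * (b - a)"
proof -
  have "\<exists>x\<in>{a..b}. g b - g a = (\<lambda>h. g' x * h) (b - a)"
  proof (rule mvt_very_simple[OF \<open>a \<le> b\<close>])
    fix x assume "a \<le> x" "x \<le> b"
    then show "(g has_derivative (\<lambda>h. g' x * h)) (at x within {a..b})"
      using has_field_derivative_subset[OF deriv \<open>{a..b} \<subseteq> S\<close>]
      by (simp add: has_field_derivative_def)
  qed
  then obtain x where "x \<in> {a..b}" "g b - g a = g' x * (b - a)" by auto
  then show ?thesis
    using bound \<open>a \<le> b\<close> by (simp add: mult_right_mono)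
qed

lemma Sup_argmax_mem:
  fixes g :: "real \<Rightarrow> real"
  assumes "continuous_on {a..b} g" "a \<le> b"
  defines "A \<equiv> {x \<in> {a..b}. \<forall>y\<in>{a..b}. g y \<le> g x}"
  shows "Sup A \<in> A"
proof (rule closed_contains_Sup)
  obtain m where m: "m \<in> {a..b}" "\<forall>y\<in>{a..b}. g y \<le> g m"
    using continuous_attains_sup[OF compact_Icc _ assms(1)] \<open>a \<le> b\<close> by auto
  then have "A = {x \<in> {a..b}. g x = g m}"
    unfolding A_def by (auto intro: order.antisym)
  then show "closed A"
    using continuous_closed_preimage_constant[OF assms(1) closed_atLeastAtMost] by simp
  show "A \<noteq> {}" using m unfolding A_def by auto
  show "bdd_above A" unfolding A_def by (rule bdd_aboveI[of _ b]) auto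
qed

lemma bstar_maximises:
  assumes "continuous_on {0..1} F"
  shows "bstar v F \<in> {0..1}" "\<And>y. y \<in> {0..1} \<Longrightarrow> U v F y \<le> U v F (bstar v F)"
proof -
  have "continuous_on {0..1} (U v F)"
    unfolding U_def by (intro continuous_intros assms)
  from Sup_argmax_mem[OF this zero_le_one]
  show "bstar v F \<in> {0..1}" "\<And>y. y \<in> {0..1} \<Longrightarrow> U v F y \<le> U v F (bstar v F)"
    unfolding bstar_def by auto
qed

lemma Finv_F:
  assumes "strict_mono_on {0..1} F" "x \<in> {0..1}"
  shows "Finv F (F x) = x"
  unfolding Finv_def
  using the_inv_into_f_f[OF strict_mono_on_imp_inj_on[OF assms(1)] assms(2)] .

lemma F_Finv:
  assumes "continuous_on {0..1} F" "strict_mono_on {0..1} F" "F 0 = 0" "F 1 = 1" "q \<in> {0..1}"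
  shows "Finv F q \<in> {0..1}" "F (Finv F q) = q"
proof -
  obtain x where "x \<in> {0..1}" "F x = q"
    using IVT'[of F 0 q 1] assms by auto
  with Finv_F[OF assms(2)] show "Finv F q \<in> {0..1}" "F (Finv F q) = q" by auto
qed

lemma maximiser_first_order_condition:
  assumes smono: "strict_mono_on {0..1} F" and F0: "F 0 = 0"
    and v: "v \<in> {0..1}" and b: "b \<in> {0..1}" "b < 1"
    and max: "\<And>y. y \<in> {0..1} \<Longrightarrow> U v F y \<le> U v F b"
    and deriv: "(F has_real_derivative d) (at b within {0..1})" and "d > 0"
  shows "b + F b / d = v"
proof (cases "b = 0")
  case True
  have "v \<le> 0"
  proof (rule ccontr)
    assume "\<not> v \<le> 0"
    then have "0 < F (v / 2)"
      using strict_mono_onD[OF smono, of 0 "v / 2"] v F0 by auto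
    then have "0 < U v F (v / 2)"
      using \<open>\<not> v \<le> 0\<close> unfolding U_def by simp
    moreover have "U v F (v / 2) \<le> U v F 0"
      using max[of "v / 2"] v True by auto
    ultimately show False using F0 by (simp add: U_def)
  qed
  then show ?thesis using True v F0 by simp
next
  case False
  then have "b \<in> interior {0..1}" using b by auto
  then have "(F has_real_derivative d) (at b)"
    using deriv at_within_interior by metis
  then have "(U v F has_real_derivative (- F b + (v - b) * d)) (at b)"
    unfolding U_def by (auto intro!: derivative_eq_intros)
  then have "- F b + (v - b) * d = 0"
  proof (rule DERIV_local_max[of _ _ _ "min b (1 - b)"])
    show "0 < min b (1 - b)" using False b by auto
    show "\<forall>y. \<bar>b - y\<bar> < min b (1 - b) \<longrightarrow> U v F y \<le> U v F b"
      using max by (auto simp: abs_less_iff)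
  qed
  then show ?thesis using \<open>d > 0\<close> by (simp add: field_simps)
qed

lemma utility_loss_quadratic_bound:
  fixes F f D :: "real \<Rightarrow> real"
  assumes "a \<le> b" "{a..b} \<subseteq> S" "0 < c" "0 \<le> lam"
    and dF: "\<And>x. x \<in> {a..b} \<Longrightarrow> (F has_real_derivative f x) (at x within S)"
    and f_ge: "\<And>x. x \<in> {a..b} \<Longrightarrow> c \<le> f x"
    and dphi: "\<And>x. x \<in> {a..b} \<Longrightarrow> ((\<lambda>x. x + F x / f x) has_real_derivative D x) (at x within S)"
    and D_le: "\<And>x. x \<in> {a..b} \<Longrightarrow> D x \<le> lam"
    and foc: "a + F a / f a = v"
  shows "U v F a - U v F b \<le> lam / c * (F b - F a)\<^sup>2"
proof -
  have sub: "{a..x} \<subseteq> S" "{a..x} \<subseteq> {a..b}" if "x \<in> {a..b}" for x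
    using that assms(2) by auto
  have phi_le: "x + F x / f x - v \<le> lam * (x - a)" if "x \<in> {a..b}" for x
    using increment_le_of_derivative_le[of a x S "\<lambda>x. x + F x / f x" D lam]
      that sub[OF that] dphi D_le foc by auto
  have F_ge: "c * (x - a) \<le> F x - F a" if "x \<in> {a..b}" for x
  proof -
    have "- F x - - F a \<le> - c * (x - a)"
    proof (rule increment_le_of_derivative_le[of a x S])
      fix y assume "y \<in> {a..x}"
      with sub[OF that] show "((\<lambda>x. - F x) has_real_derivative - f y) (at y within S)" "- f y \<le> - c"
        using dF f_ge by (auto intro: DERIV_minus)
    qed (use that sub[OF that] in auto)
    then show ?thesis by simp
  qed
  define h where "h x = U v F a - U v F x - lam / c * (F x - F a)\<^sup>2" for x
  define h' where "h' x = f x * (x + F x / f x - v - 2 * (lam / c) * (F x - F a))" for x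
  have "(h has_real_derivative h' x) (at x within S)" if x: "x \<in> {a..b}" for x
  proof -
    have "f x > 0" using f_ge[OF x] \<open>0 < c\<close> by linarith
    then have "- (- F x + (v - x) * f x) - lam / c * (2 * (F x - F a) * f x) = h' x"
      unfolding h'_def by (simp add: field_simps)
    moreover have "(h has_real_derivative
        - (- F x + (v - x) * f x) - lam / c * (2 * (F x - F a) * f x)) (at x within S)"
      unfolding h_def U_def using \<open>0 < c\<close> by (auto intro!: derivative_eq_intros dF[OF x])
    ultimately show ?thesis by simp
  qed
  moreover have "h' x \<le> 0" if x: "x \<in> {a..b}" for x
  proof -
    have "lam * (x - a) \<le> lam / c * (F x - F a)"
      using mult_left_mono[OF F_ge[OF x], of "lam / c"] \<open>0 < c\<close> \<open>0 \<le> lam\<close> by simp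
    moreover have "0 \<le> lam * (x - a)" using x \<open>0 \<le> lam\<close> by simp
    moreover have "0 \<le> f x" using f_ge[OF x] \<open>0 < c\<close> by linarith
    ultimately show ?thesis
      unfolding h'_def using phi_le[OF x] by (simp add: mult_nonneg_nonpos)
  qed
  ultimately have "h b - h a \<le> 0 * (b - a)"
    by (intro increment_le_of_derivative_le[OF assms(1,2)])
  then show ?thesis unfolding h_def by simp
qed

theorem lemma6:
  fixes F f :: "real \<Rightarrow> real" and v \<Delta> c_f C_f lam q :: real
  assumes cont: "continuous_on {0..1} F"
    and smono: "strict_mono_on {0..1} F"
    and F0: "F 0 = 0" and F1: "F 1 = 1"
    and v: "v \<in> {0..1}"
    and pos: "\<Delta> > 0" "0 < c_f" "c_f < C_f" "lam > 0"
    and dens: "\<forall>b \<in> {bstar v F - \<Delta> .. bstar v F + \<Delta>} \<inter> {0..1}.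
                 (F has_real_derivative f b) (at b within {0..1}) \<and> c_f < f b \<and> f b < C_f"
    and phi: "\<forall>b \<in> {bstar v F .. bstar v F + \<Delta>} \<inter> {0..1}.
                 \<exists>d. ((\<lambda>x. x + F x / f x) has_real_derivative d) (at b within {0..1}) \<and> d \<le> lam"
    and q: "q \<in> {qstar v F .. qstar v F + C_f * \<Delta>}" "q \<in> {0..1}"
    and qinv: "Finv F q \<in> {bstar v F .. bstar v F + \<Delta>}"
  shows "W v F (qstar v F) - W v F q \<le> lam / c_f * (qstar v F - q)^2"
proof -
  define bs where "bs = bstar v F"
  define b where "b = Finv F q"
  note bs01 = bstar_maximises(1)[OF cont, of v, folded bs_def]
  note bs_max = bstar_maximises(2)[OF cont, of _ v, folded bs_def]
  have b01: "b \<in> {0..1}" and Fb: "F b = q"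
    unfolding b_def using F_Finv[OF cont smono F0 F1 q(2)] by auto
  have "{bs..b} \<subseteq> {0..1}" using bs01 b01 by auto
  moreover have "{bs..b} \<subseteq> {bs - \<Delta>..bs + \<Delta>}" using qinv pos(1) by (auto simp: b_def bs_def)
  ultimately have dens': "\<And>x. x \<in> {bs..b} \<Longrightarrow> (F has_real_derivative f x) (at x within {0..1}) \<and> c_f < f x"
    and "\<forall>x \<in> {bs..b}. \<exists>d. ((\<lambda>x. x + F x / f x) has_real_derivative d) (at x within {0..1}) \<and> d \<le> lam"
    using dens phi qinv by (auto simp: bs_def b_def subset_iff)
  then obtain D where "\<And>x. x \<in> {bs..b} \<Longrightarrow>
      ((\<lambda>x. x + F x / f x) has_real_derivative D x) (at x within {0..1}) \<and> D x \<le> lam"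
    by metis
  moreover have "bs + F bs / f bs = v" if "bs < b"
    using maximiser_first_order_condition[OF smono F0 v bs01 _ bs_max] dens'[of bs] that b01 pos(2)
    by auto
  ultimately have "U v F bs - U v F b \<le> lam / c_f * (F b - F bs)\<^sup>2"
    using utility_loss_quadratic_bound[of bs b "{0..1}" c_f lam F f D v] \<open>{bs..b} \<subseteq> {0..1}\<close>
      dens' pos qinv by (cases "bs = b") (auto simp: b_def bs_def less_eq_real_def)
  then show ?thesis
    unfolding W_def qstar_def Finv_F[OF smono bs01, folded bs_def] b_def[symmetric] bs_def[symmetric]
    using Fb by (simp add: power2_commute)
qed

end
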